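(* Let $d_A,d_B,r\in\mathbb{N}$ and let $O\subset\mathcal{C}_{d_A,d_B,r}$ be a non-empty open subset. Let $Z=(d_A,d_B,d_C,p,h)$ be a quantum circuit topology with $p<2d_Ad_Br-d_A^2-r^2$ or $d_C<r$. Then $H(Z)\cap O$ has measure zero in the smooth manifold $O$.
   Context: For $s\leqslant m$, $V_{s,m}=\{V\in\mathbb{C}^{m\times s}:V^{\ast}V=I\}$. $\mathcal{C}_{d_A,d_B}$ is the set of positive semi-definite $C\in\mathbb{C}^{d_Ad_B\times d_Ad_B}$ (on $\mathbb{C}^{d_A}\otimes\mathbb{C}^{d_B}$) with $\mathrm{tr}_B C=\frac{1}{d_A}I$, and $\mathcal{C}_{d_A,d_B,r}$ its elements of rank $r$; $\mathcal{C}_{d_A,d_B,r}$ is a smooth embedded submanifold of $\mathbb{C}^{d_Ad_B\times d_Ad_B}\cong\mathbb{R}^{2d_A^2d_B^2}$ of dimension $2d_Ad_Br-d_A^2-r^2$. A quantum circuit topology is a 5-tuple $Z=(d_A,d_B,d_C,p,h)$ with $d_Bd_C\geqslant d_A$, $p\in\mathbb{N}_0$ and $h:[0,2\pi]^p\to V_{d_A,d_Bd_C}$ smooth. For $V\in V_{d_A,d_Cd_B}$ let $\mathcal{E}_V(M)=\mathrm{tr}_C(VMV^{\ast})$ with $\mathrm{tr}_C(X)=\sum_{i=1}^{d_C}(\langle i|\otimes I_{d_B})X(|i\rangle\otimes I_{d_B})$, and $T(V)=\frac{1}{d_A}\sum_{i,j=1}^{d_A}|i\rangle\langle j|\otimes\mathcal{E}_V(|i\rangle\langle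 j|)$. Then $H(Z):=T(h([0,2\pi]^p))$. *)

theory Defs
  imports "HOL-Analysis.Analysis"
begin

definition cadj :: "complex^('n::finite)^('m::finite) \<Rightarrow> complex^'m^'n" where
  "cadj A = (\<chi> i j. cnj (A $ j $ i))"

definition isometry_mat :: "complex^('a::finite)^('m::finite) \<Rightarrow> bool" where
  "isometry_mat V \<longleftrightarrow> cadj V ** V = mat 1"

definition psd :: "complex^('n::finite)^'n \<Rightarrow> bool" where
  "psd C \<longleftrightarrow> (\<forall>x::complex^'n.
      let q = (\<Sum>i\<in>UNIV. \<Sum>j\<in>UNIV. cnj (x $ i) * C $ i $ j * x $ j)
      in Im q = 0 \<and> Re q \<ge> 0)"

text \<open>Partial trace over the second tensor factor B (space C^dA (x) C^dB indexed by 'a \<times> 'b).\<close>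
definition ptrace_B :: "complex^('a::finite\<times>'b::finite)^('a\<times>'b) \<Rightarrow> complex^'a^'a" where
  "ptrace_B C = (\<chi> a a'. \<Sum>b\<in>UNIV. C $ (a, b) $ (a', b))"

text \<open>Partial trace over the first factor C of C^dC (x) C^dB (indexed by 'c \<times> 'b).\<close>
definition ptrace_C :: "complex^('c::finite\<times>'b::finite)^('c\<times>'b) \<Rightarrow> complex^'b^'b" where
  "ptrace_C X = (\<chi> b b'. \<Sum>c\<in>UNIV. X $ (c, b) $ (c, b'))"

definition choi_set :: "(complex^('a::finite\<times>'b::finite)^('a\<times>'b)) set" where
  "choi_set = {C. psd C \<and> ptrace_B C = (1 / of_nat CARD('a)) *\<^sub>R mat 1}"

definition choi_set_rank :: "nat \<Rightarrow> (complex^('a::finite\<times>'b::finite)^('a\<times>'b)) set" where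
  "choi_set_rank r = {C \<in> choi_set. rank C = r}"

definition matunit :: "'a::finite \<Rightarrow> 'a \<Rightarrow> complex^'a^'a" where
  "matunit i j = (\<chi> x y. if x = i \<and> y = j then 1 else 0)"

definition chan :: "complex^('a::finite)^('c::finite\<times>'b::finite) \<Rightarrow> complex^'a^'a \<Rightarrow> complex^'b^'b" where
  "chan V M = ptrace_C (V ** M ** cadj V)"

text \<open>Choi map T(V) = (1/dA) \<Sum>_{i,j} |i><j| (x) E_V(|i><j|); entry ((i,b),(j,b')).\<close>
definition choi :: "complex^('a::finite)^('c::finite\<times>'b::finite) \<Rightarrow> complex^('a\<times>'b)^('a\<times>'b)" where
  "choi V = (\<chi> x y. (1 / of_nat CARD('a)) * chan V (matunit (fst x) (fst y)) $ snd x $ snd y)"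

fun Ck_on :: "nat \<Rightarrow> ('a::euclidean_space \<Rightarrow> 'b::real_normed_vector) \<Rightarrow> 'a set \<Rightarrow> bool" where
  "Ck_on 0 f U = continuous_on U f"
| "Ck_on (Suc n) f U = (f differentiable_on U \<and>
      (\<forall>e\<in>Basis. Ck_on n (\<lambda>x. frechet_derivative f (at x) e) U))"

definition smooth_on :: "'a::euclidean_space set \<Rightarrow> ('a \<Rightarrow> 'b::real_normed_vector) \<Rightarrow> bool" where
  "smooth_on U f \<longleftrightarrow> open U \<and> (\<forall>n. Ck_on n f U)"

text \<open>Local parametrisation (inverse of a chart) of an embedded submanifold M with model
  space real^'k: a smooth immersion of an open set onto an open subset of M which is a
  homeomorphism onto its image.\<close>
definition local_param :: "'v::real_normed_vector set \<Rightarrow> (real^'k::finite) set \<Rightarrow> (real^'k \<Rightarrow> 'v) \<Rightarrow> bool" where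
  "local_param M U \<psi> \<longleftrightarrow> open U \<and> smooth_on U \<psi> \<and>
     (\<forall>x\<in>U. inj (frechet_derivative \<psi> (at x))) \<and>
     \<psi> ` U \<subseteq> M \<and> openin (top_of_set M) (\<psi> ` U) \<and>
     (\<exists>g. homeomorphism U (\<psi> ` U) \<psi> g)"

text \<open>S has measure zero in the CARD('k)-dimensional submanifold M: its preimage under
  every chart parametrisation is Lebesgue-null.\<close>
definition null_in_manifold :: "'k::finite itself \<Rightarrow> 'v::real_normed_vector set \<Rightarrow> 'v set \<Rightarrow> bool" where
  "null_in_manifold _ M S \<longleftrightarrow>
     (\<forall>U (\<psi>::real^'k \<Rightarrow> 'v). local_param M U \<psi> \<longrightarrow> {x \<in> U. \<psi> x \<in> S} \<in> null_sets lebesgue)"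

text \<open>The parameter cube [0,2\<pi>]^p, realised inside real^'p on the coordinates I (card I = p);
  the remaining coordinates are 0. This allows p = 0.\<close>
definition param_cube :: "'p::finite set \<Rightarrow> (real^'p) set" where
  "param_cube I = {\<theta>. \<forall>i. if i \<in> I then 0 \<le> \<theta> $ i \<and> \<theta> $ i \<le> 2 * pi else \<theta> $ i = 0}"

definition smooth_on_closed :: "(real^'p::finite) set \<Rightarrow> (real^'p \<Rightarrow> 'b::real_normed_vector) \<Rightarrow> bool" where
  "smooth_on_closed K h \<longleftrightarrow> (\<exists>U g. K \<subseteq> U \<and> smooth_on U g \<and> (\<forall>x\<in>K. g x = h x))"

text \<open>Z = (dA, dB, dC, p, h) with dA = CARD('a), dB = CARD('b), dC = CARD('c), p = card I.\<close>
definition circuit_topology :: "'p::finite set \<Rightarrow> (real^'p \<Rightarrow> complex^('a::finite)^('c::finite\<times>'b::finite)) \<Rightarrow> bool" where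
  "circuit_topology I h \<longleftrightarrow> CARD('b) * CARD('c) \<ge> CARD('a) \<and>
     smooth_on_closed (param_cube I) h \<and> (\<forall>\<theta>\<in>param_cube I. isometry_mat (h \<theta>))"

definition H_set :: "'p::finite set \<Rightarrow> (real^'p \<Rightarrow> complex^('a::finite)^('c::finite\<times>'b::finite))
    \<Rightarrow> (complex^('a\<times>'b)^('a\<times>'b)) set" where
  "H_set I h = choi ` h ` param_cube I"

end

theory Submission
  imports Defs
begin

text \<open>If \<open>d\<^sub>C < r\<close> there is nothing to prove: \<open>T(V) = W W\<^sup>*/d\<^sub>A\<close> with \<open>W\<close> having \<open>d\<^sub>C\<close> columns,
  so every Choi matrix in \<open>H(Z)\<close> has rank at most \<open>d\<^sub>C\<close>. If \<open>p\<close> is smaller than the dimension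
  \<open>k\<close> of the manifold, extend the parametrisation \<open>T \<circ> h\<close> to a differentiable map \<open>\<phi>\<close> on \<open>\<real>\<^sup>k\<close>;
  then \<open>H(Z)\<close> lies in the image of a coordinate hyperplane under \<open>\<phi>\<close>. In a chart \<open>\<psi>\<close> with
  inverse \<open>g\<close>, the injectivity of \<open>\<psi>'\<close> makes \<open>g \<circ> \<phi>\<close> locally Lipschitz, and locally Lipschitz
  maps between spaces of equal dimension send null sets to null sets. Neither the value of \<open>k\<close>
  nor \<open>O \<noteq> \<emptyset>\<close> is used.\<close>

lemma choi_nth:
  fixes V :: "complex^('a::finite)^('c::finite\<times>'b::finite)"
  shows "choi V $ x $ y =
    (1 / of_nat CARD('a)) * (\<Sum>c\<in>UNIV. V $ (c, snd x) $ fst x * cnj (V $ (c, snd y) $ fst y))"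
proof -
  have "(V ** matunit i j ** cadj V) $ p $ q = V $ p $ i * cnj (V $ q $ j)" for i j p q
  proof -
    have "(\<Sum>l\<in>UNIV. V $ p $ l * (if l = i \<and> k = j then 1 else 0)) = (if k = j then V $ p $ i else 0)"
      for k
      by (cases "k = j") (simp_all add: if_distrib[where f="\<lambda>z. _ * z"] cong: if_cong)
    then show ?thesis
      by (simp add: matrix_matrix_mult_def matunit_def cadj_def if_distrib[where f="\<lambda>z. z * _"]
          cong: if_cong)
  qed
  then show ?thesis by (simp add: choi_def chan_def ptrace_C_def)
qed

lemma rank_choi_le: "rank (choi V) \<le> CARD('c)"
  for V :: "complex^('a::finite)^('c::finite\<times>'b::finite)"
proof -
  define X :: "complex^('a\<times>'b)^'c"
    where "X = (\<chi> c y. (1 / of_nat CARD('a)) * cnj (V $ (c, snd y) $ fst y))"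
  have row_choi: "choi V $ x = (\<Sum>c\<in>UNIV. V $ (c, snd x) $ fst x *s X $ c)" for x
    by (simp add: vec_eq_iff choi_nth X_def sum_component sum_distrib_left mult_ac)
  have rows_X: "rows X = range (\<lambda>c. X $ c)"
    by (auto simp: rows_def row_def vec_lambda_eta)
  have "rows (choi V) \<subseteq> vec.span (rows X)"
  proof
    fix v assume "v \<in> rows (choi V)"
    then obtain x where v: "v = choi V $ x" by (auto simp: rows_def row_def vec_lambda_eta)
    have "X $ c \<in> rows X" for c by (simp add: rows_X)
    then show "v \<in> vec.span (rows X)"
      unfolding v row_choi by (intro vec.span_sum vec.span_scale vec.span_base)
  qed
  then have "vec.dim (rows (choi V)) \<le> card (rows X)"
    by (intro vec.dim_le_card) (auto simp: rows_X)
  also have "card (rows X) \<le> CARD('c)"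
    unfolding rows_X by (rule card_image_le) simp
  finally show ?thesis by (simp add: row_rank_def_gen)
qed

lemma H_set_disjoint_choi_set_rank:
  fixes h :: "real^'p::finite \<Rightarrow> complex^('a::finite)^('c::finite\<times>'b::finite)"
  assumes "CARD('c) < r"
  shows "H_set I h \<inter> choi_set_rank r = {}"
proof -
  have "rank (choi V) \<noteq> r" for V :: "complex^'a^('c\<times>'b)"
    using rank_choi_le[of V] assms by simp
  then show ?thesis by (auto simp: H_set_def choi_set_rank_def)
qed

lemma bounded_linear_axis: "bounded_linear (axis i :: 'a::real_normed_vector \<Rightarrow> 'a^'i::finite)"
proof (rule bounded_linear_intro[where K=1])
  show "norm (axis i x) \<le> norm x * 1" for x :: 'a
    using L2_set_le_sum[of UNIV "\<lambda>j. norm (axis i x $ j)"]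
    by (simp add: norm_vec_def axis_def if_distrib cong: if_cong)
qed (auto simp: vec_eq_iff axis_def)

lemma differentiable_vec_lambda:
  fixes f :: "'i::finite \<Rightarrow> 'a::real_normed_vector \<Rightarrow> 'b::real_normed_vector"
  assumes "\<And>i. f i differentiable (at z within S)"
  shows "(\<lambda>x. \<chi> i. f i x) differentiable (at z within S)"
proof -
  have "(\<lambda>x. \<chi> i. f i x) = (\<lambda>x. \<Sum>i\<in>UNIV. axis i (f i x))"
    by (auto simp: vec_eq_iff sum_component axis_def if_distrib cong: if_cong)
  moreover have "(\<lambda>x. axis i (f i x)) differentiable (at z within S)" for i
    using differentiable_compose[OF bounded_linear_imp_differentiable[OF bounded_linear_axis[of i]] assms[of i]]
    by (simp add: o_def)
  ultimately show ?thesis by (simp add: differentiable_sum)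
qed

lemma differentiable_choi: "choi differentiable (at V within S)"
  for V :: "complex^('a::finite)^('c::finite\<times>'b::finite)"
proof -
  have entry: "bounded_linear (\<lambda>V::complex^'a^('c\<times>'b). V $ p $ q)" for p q
    using bounded_linear_compose[OF bounded_linear_vec_nth bounded_linear_vec_nth] .
  have choi_eq: "choi = (\<lambda>V::complex^'a^('c\<times>'b). \<chi> x y.
      (1 / of_nat CARD('a)) * (\<Sum>c\<in>UNIV. V $ (c, snd x) $ fst x * cnj (V $ (c, snd y) $ fst y)))"
    by (auto simp: vec_eq_iff choi_nth)
  show ?thesis
    unfolding choi_eq
    by (intro differentiable_vec_lambda differentiable_mult differentiable_sum ballI
        differentiable_const bounded_linear_imp_differentiable entry
        bounded_linear_compose[OF bounded_linear_cnj entry]) simp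
qed

lemma smooth_on_imp_differentiable_on: "smooth_on U f \<Longrightarrow> f differentiable_on U"
  by (metis Ck_on.simps(2) smooth_on_def)

lemma param_cube_subset_hyperplane_image:
  fixes I :: "'p::finite set"
  assumes "card I < CARD('k::finite)"
  obtains E :: "real^'k \<Rightarrow> real^'p" and m :: 'k
  where "bounded_linear E" "param_cube I \<subseteq> E ` {y. y $ m = 0}"
proof -
  obtain j :: "'p \<Rightarrow> 'k" where j: "inj_on j I"
    using card_le_inj[of I "UNIV :: 'k set"] assms by auto
  have "card (j ` I) < CARD('k)" using assms by (simp add: card_image j)
  then obtain m where m: "m \<notin> j ` I" by (metis UNIV_I card_seteq finite less_le subsetI)
  define E :: "real^'k \<Rightarrow> real^'p" where "E y = (\<chi> i. if i \<in> I then y $ j i else 0)" for y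
  have "linear E"
    by (auto simp: E_def vec_eq_iff intro!: linearI)
  then have "bounded_linear E"
    by (simp add: linear_conv_bounded_linear)
  moreover have "\<theta> \<in> E ` {y. y $ m = 0}" if "\<theta> \<in> param_cube I" for \<theta>
  proof
    show "\<theta> = E (\<chi> l. if l \<in> j ` I then \<theta> $ inv_into I j l else 0)"
      using that by (auto simp: vec_eq_iff E_def inv_into_f_f j param_cube_def)
  qed (simp add: m)
  ultimately show ?thesis using that by blast
qed

lemma injective_derivative_imp_bounded_below:
  fixes \<psi> :: "'x::real_normed_vector \<Rightarrow> 'v::euclidean_space"
  assumes der: "(\<psi> has_derivative D) (at x0)" and "inj D"
  obtains c \<delta> where "c > 0" "\<delta> > 0"
    "\<And>x. norm (x - x0) < \<delta> \<Longrightarrow> c * norm (x - x0) \<le> norm (\<psi> x - \<psi> x0)"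
proof -
  obtain B where B: "B > 0" "\<And>v. B * norm v \<le> norm (D v)"
    using linear_inj_bounded_below_pos[OF has_derivative_linear[OF der] \<open>inj D\<close>] by blast
  obtain \<delta> where "\<delta> > 0"
    and \<delta>: "\<And>x. norm (x - x0) < \<delta> \<Longrightarrow> norm (\<psi> x - \<psi> x0 - D (x - x0)) \<le> B / 2 * norm (x - x0)"
    using der B(1) unfolding has_derivative_at_alt by (meson half_gt_zero)
  have "B / 2 * norm (x - x0) \<le> norm (\<psi> x - \<psi> x0)" if "norm (x - x0) < \<delta>" for x
  proof -
    have "norm (D (x - x0)) \<le> norm (\<psi> x - \<psi> x0) + norm (\<psi> x - \<psi> x0 - D (x - x0))"
      using norm_triangle_sub[of "D (x - x0)" "\<psi> x - \<psi> x0"] by (simp add: norm_minus_commute)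
    then show ?thesis using B(2)[of "x - x0"] \<delta>[OF that] by linarith
  qed
  with B(1) \<open>\<delta> > 0\<close> show ?thesis using that[of "B / 2" \<delta>] by simp
qed

lemma differentiable_imp_Lipschitz_at:
  fixes \<phi> :: "'y::real_normed_vector \<Rightarrow> 'v::real_normed_vector"
  assumes "\<phi> differentiable (at y0)"
  obtains B \<delta> where "\<delta> > 0" "\<And>y. norm (y - y0) < \<delta> \<Longrightarrow> norm (\<phi> y - \<phi> y0) \<le> B * norm (y - y0)"
proof -
  obtain D where der: "(\<phi> has_derivative D) (at y0)"
    using assms by (auto simp: differentiable_def)
  obtain K where K: "\<And>v. norm (D v) \<le> norm v * K"
    using bounded_linear.bounded[OF has_derivative_bounded_linear[OF der]] by blast
  obtain \<delta> where "\<delta> > 0"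
    and \<delta>: "\<And>y. norm (y - y0) < \<delta> \<Longrightarrow> norm (\<phi> y - \<phi> y0 - D (y - y0)) \<le> 1 * norm (y - y0)"
    using der unfolding has_derivative_at_alt by (meson zero_less_one)
  have "norm (\<phi> y - \<phi> y0) \<le> (K + 1) * norm (y - y0)" if "norm (y - y0) < \<delta>" for y
  proof -
    have "norm (\<phi> y - \<phi> y0) \<le> norm (D (y - y0)) + norm (\<phi> y - \<phi> y0 - D (y - y0))"
      by (rule norm_triangle_sub)
    then show ?thesis using K[of "y - y0"] \<delta>[OF that] by (simp add: algebra_simps)
  qed
  with \<open>\<delta> > 0\<close> show ?thesis using that by blast
qed

text \<open>The inverse \<open>g\<close> of a chart is merely continuous, but \<open>\<psi>(g z) = z\<close> and the lower bound on
  \<open>\<psi>\<close> near \<open>g z\<^sub>0\<close> transfer the Lipschitz bound of \<open>\<phi>\<close> to \<open>g \<circ> \<phi>\<close>.\<close>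
lemma chart_inverse_comp_Lipschitz_at:
  fixes \<psi> :: "'x::real_normed_vector \<Rightarrow> 'v::euclidean_space" and \<phi> :: "'y::real_normed_vector \<Rightarrow> 'v"
  assumes hom: "homeomorphism W (\<psi> ` W) \<psi> g" and "open W" and "\<psi> differentiable_on W"
    and inj: "\<forall>x\<in>W. inj (frechet_derivative \<psi> (at x))"
    and \<phi>_diff: "\<phi> differentiable (at y0)" and y0: "\<phi> y0 \<in> \<psi> ` W"
  obtains B \<delta> where "\<delta> > 0"
    "\<And>y. norm (y - y0) < \<delta> \<Longrightarrow> \<phi> y \<in> \<psi> ` W \<Longrightarrow> norm (g (\<phi> y) - g (\<phi> y0)) \<le> B * norm (y - y0)"
proof -
  define x0 where "x0 = g (\<phi> y0)"
  have x0: "x0 \<in> W" "\<psi> x0 = \<phi> y0"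
    using y0 hom by (auto simp: x0_def homeomorphism_def)
  have "(\<psi> has_derivative frechet_derivative \<psi> (at x0)) (at x0)"
    using assms(2,3) x0(1) by (metis at_within_open differentiable_on_def frechet_derivative_works)
  then obtain c \<delta> where "c > 0" "\<delta> > 0"
    and lower: "\<And>x. norm (x - x0) < \<delta> \<Longrightarrow> c * norm (x - x0) \<le> norm (\<psi> x - \<psi> x0)"
    using injective_derivative_imp_bounded_below inj x0(1) by blast
  obtain B \<delta>1 where "\<delta>1 > 0"
    and upper: "\<And>y. norm (y - y0) < \<delta>1 \<Longrightarrow> norm (\<phi> y - \<phi> y0) \<le> B * norm (y - y0)"
    using differentiable_imp_Lipschitz_at[OF \<phi>_diff] by blast
  obtain \<epsilon> where "\<epsilon> > 0"
    and g_cont: "\<And>z. z \<in> \<psi> ` W \<Longrightarrow> dist z (\<phi> y0) < \<epsilon> \<Longrightarrow> dist (g z) x0 < \<delta>"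
    using hom y0 \<open>\<delta> > 0\<close> unfolding homeomorphism_def continuous_on_iff x0_def by metis
  obtain \<delta>2 where "\<delta>2 > 0" and \<phi>_cont: "\<And>y. dist y y0 < \<delta>2 \<Longrightarrow> dist (\<phi> y) (\<phi> y0) < \<epsilon>"
    using differentiable_imp_continuous_within[OF \<phi>_diff] \<open>\<epsilon> > 0\<close>
    unfolding continuous_at_eps_delta by metis
  have "norm (g (\<phi> y) - x0) \<le> B / c * norm (y - y0)"
    if "norm (y - y0) < min \<delta>1 \<delta>2" "\<phi> y \<in> \<psi> ` W" for y
  proof -
    have "\<psi> (g (\<phi> y)) = \<phi> y" using homeomorphism_apply2[OF hom that(2)] .
    moreover have "norm (g (\<phi> y) - x0) < \<delta>"
      using g_cont[OF that(2) \<phi>_cont] that(1) by (simp add: dist_norm)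
    ultimately have "c * norm (g (\<phi> y) - x0) \<le> norm (\<phi> y - \<phi> y0)"
      using lower x0(2) by metis
    also have "\<dots> \<le> B * norm (y - y0)" using upper that(1) by simp
    finally show ?thesis using \<open>c > 0\<close> by (simp add: field_simps)
  qed
  then show ?thesis
    using that[of "min \<delta>1 \<delta>2" "B / c"] \<open>\<delta>1 > 0\<close> \<open>\<delta>2 > 0\<close> by (simp add: x0_def)
qed

lemma negligible_chart_preimage_of_differentiable_image:
  fixes \<psi> :: "'x::euclidean_space \<Rightarrow> 'v::euclidean_space" and \<phi> :: "'y::euclidean_space \<Rightarrow> 'v"
  assumes "DIM('y) \<le> DIM('x)"
    and hom: "homeomorphism W (\<psi> ` W) \<psi> g" and "open W" and "\<psi> differentiable_on W"
    and "\<forall>x\<in>W. inj (frechet_derivative \<psi> (at x))"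
    and "negligible S" and \<phi>_diff: "\<forall>y\<in>S. \<phi> differentiable (at y)"
  shows "negligible {x \<in> W. \<psi> x \<in> \<phi> ` S}"
proof -
  define S' where "S' = {y \<in> S. \<phi> y \<in> \<psi> ` W}"
  have "negligible ((g \<circ> \<phi>) ` S')"
  proof (rule negligible_locally_Lipschitz_image)
    show "negligible S'" using \<open>negligible S\<close> by (rule negligible_subset) (auto simp: S'_def)
  next
    fix y0 assume "y0 \<in> S'"
    then have "\<phi> differentiable (at y0)" "\<phi> y0 \<in> \<psi> ` W" using \<phi>_diff by (auto simp: S'_def)
    then obtain B \<delta> where "\<delta> > 0" "\<And>y. norm (y - y0) < \<delta> \<Longrightarrow> \<phi> y \<in> \<psi> ` W \<Longrightarrow>
        norm (g (\<phi> y) - g (\<phi> y0)) \<le> B * norm (y - y0)"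
      using chart_inverse_comp_Lipschitz_at[OF assms(2-5)] by blast
    then show "\<exists>T B. open T \<and> y0 \<in> T \<and> (\<forall>y\<in>S' \<inter> T. norm ((g \<circ> \<phi>) y - (g \<circ> \<phi>) y0) \<le> B * norm (y - y0))"
      by (intro exI[of _ "ball y0 \<delta>"] exI[of _ B]) (auto simp: S'_def dist_norm norm_minus_commute)
  qed (use assms(1) in simp)
  moreover have "{x \<in> W. \<psi> x \<in> \<phi> ` S} \<subseteq> (g \<circ> \<phi>) ` S'"
    using hom by (force simp: S'_def homeomorphism_def)
  ultimately show ?thesis by (rule negligible_subset)
qed

lemma H_set_subset_differentiable_image_of_negligible:
  fixes I :: "'p::finite set" and h :: "real^'p \<Rightarrow> complex^('a::finite)^('c::finite\<times>'b::finite)"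
  assumes "circuit_topology I h" and "card I < CARD('k::finite)"
  obtains S :: "(real^'k) set" and \<phi>
  where "negligible S" "\<forall>y\<in>S. \<phi> differentiable (at y)" "H_set I h \<subseteq> \<phi> ` S"
proof -
  obtain \<Omega> h' where cube: "param_cube I \<subseteq> \<Omega>" and "smooth_on \<Omega> h'"
    and h': "\<forall>\<theta>\<in>param_cube I. h' \<theta> = h \<theta>"
    using assms(1) unfolding circuit_topology_def smooth_on_closed_def by blast
  then have "open \<Omega>" "h' differentiable_on \<Omega>"
    by (simp_all add: smooth_on_def smooth_on_imp_differentiable_on)
  obtain E :: "real^'k \<Rightarrow> real^'p" and m where "bounded_linear E"
    and E: "param_cube I \<subseteq> E ` {y. y $ m = 0}"
    using param_cube_subset_hyperplane_image assms(2) by blast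
  define S where "S = {y. y $ m = 0 \<and> E y \<in> param_cube I}"
  have "negligible S"
    by (rule negligible_subset[OF negligible_standard_hyperplane_cart[of m]]) (auto simp: S_def)
  moreover have "(choi \<circ> h' \<circ> E) differentiable (at y)" if "y \<in> S" for y
  proof -
    have "E y \<in> \<Omega>" using cube that by (auto simp: S_def)
    then have "h' differentiable (at (E y))"
      using \<open>open \<Omega>\<close> \<open>h' differentiable_on \<Omega>\<close> by (metis at_within_open differentiable_on_def)
    then have "(h' \<circ> E) differentiable (at y)"
      by (rule differentiable_chain_at[OF bounded_linear_imp_differentiable[OF \<open>bounded_linear E\<close>]])
    then show ?thesis
      unfolding o_assoc[symmetric] by (rule differentiable_chain_at[OF _ differentiable_choi])
  qed
  moreover have "H_set I h \<subseteq> (choi \<circ> h' \<circ> E) ` S"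
  proof
    fix z assume "z \<in> H_set I h"
    then obtain \<theta> where \<theta>: "\<theta> \<in> param_cube I" "z = choi (h \<theta>)" by (auto simp: H_set_def)
    obtain y where y: "y $ m = 0" "E y = \<theta>" using subsetD[OF E \<theta>(1)] by blast
    then have "y \<in> S" using \<theta>(1) unfolding S_def by blast
    moreover have "z = (choi \<circ> h' \<circ> E) y" using \<theta> h' y by simp
    ultimately show "z \<in> (choi \<circ> h' \<circ> E) ` S" by (rule rev_image_eqI)
  qed
  ultimately show ?thesis using that by blast
qed

theorem lemma9:
  fixes U :: "(complex^('a::finite\<times>'b::finite)^('a\<times>'b)) set"
    and r :: nat
    and I :: "'p::finite set"
    and h :: "real^'p \<Rightarrow> complex^'a^('c::finite\<times>'b)"
  assumes dimk: "int CARD('k::finite) =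
      2 * int CARD('a) * int CARD('b) * int r - int CARD('a) ^ 2 - int r ^ 2"
    and O_open: "openin (top_of_set (choi_set_rank r)) U"
    and O_ne: "U \<noteq> {}"
    and Z: "circuit_topology I h"
    and cond: "card I < CARD('k) \<or> CARD('c) < r"
  shows "null_in_manifold TYPE('k) U (H_set I h \<inter> U)"
  unfolding null_in_manifold_def
proof (intro allI impI)
  fix W and \<psi> :: "real^'k \<Rightarrow> complex^('a\<times>'b)^('a\<times>'b)"
  assume "local_param U W \<psi>"
  then have "open W" "smooth_on W \<psi>" "\<forall>x\<in>W. inj (frechet_derivative \<psi> (at x))"
    "\<exists>g. homeomorphism W (\<psi> ` W) \<psi> g"
    by (auto simp: local_param_def)
  then obtain g where chart: "homeomorphism W (\<psi> ` W) \<psi> g" "open W" "\<psi> differentiable_on W"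
    "\<forall>x\<in>W. inj (frechet_derivative \<psi> (at x))"
    using smooth_on_imp_differentiable_on by blast
  show "{x \<in> W. \<psi> x \<in> H_set I h \<inter> U} \<in> null_sets lebesgue"
  proof (cases "CARD('c) < r")
    case True
    then have "H_set I h \<inter> U = {}"
      using H_set_disjoint_choi_set_rank openin_imp_subset[OF O_open] by blast
    then show ?thesis by simp
  next
    case False
    with cond have "card I < CARD('k)" by simp
    then obtain S :: "(real^'k) set" and \<phi> where "negligible S"
      "\<forall>y\<in>S. \<phi> differentiable (at y)" "H_set I h \<subseteq> \<phi> ` S"
      by (rule H_set_subset_differentiable_image_of_negligible[OF Z])
    then have "negligible {x \<in> W. \<psi> x \<in> \<phi> ` S}"
      by (intro negligible_chart_preimage_of_differentiable_image[OF _ chart]) simp_all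
    moreover have "{x \<in> W. \<psi> x \<in> H_set I h \<inter> U} \<subseteq> {x \<in> W. \<psi> x \<in> \<phi> ` S}"
      using \<open>H_set I h \<subseteq> \<phi> ` S\<close> by blast
    ultimately have "negligible {x \<in> W. \<psi> x \<in> H_set I h \<inter> U}" by (rule negligible_subset)
    then show ?thesis by (simp add: negligible_iff_null_sets)
  qed
qed

end
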